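(* Let $p,q$ be distinct propositional letters, and define $p^0:=q\looparrowright p$, $p^{n+1}:=p\to p^n$. For every $n\in\omega\setminus\{0\}$ and every Epstein relation $\mathfrak{R}$: if $\mathfrak{R}\vDash\sigma(q\looparrowright p^n)$ for every substitution $\sigma$, then $\mathfrak{R}\vDash p\looparrowright p$.
   Context: Language: propositional letters $\Phi=\{p_0,p_1,\dots\}$; connectives $\neg$, $\lor,\wedge,\to,\leftrightarrow,\vartriangle,\looparrowright$; $\mathsf{FOR}$ the set of all formulas. A substitution is an endomorphism of the free formula algebra. An Epstein model is $\langle v,\mathfrak{R}\rangle$ with $v:\Phi\to\{0,1\}$ and $\mathfrak{R}\subseteq\mathsf{FOR}^2$ (an Epstein relation); truth: letters via $v$, boolean connectives classical, $\langle v,\mathfrak{R}\rangle\vDash\varphi\vartriangle\psi$ iff both true and $\langle\varphi,\psi\rangle\in\mathfrak{R}$; $\langle v,\mathfrak{R}\rangle\vDash\varphi\looparrowright\psi$ iff $\varphi\to\psi$ true and $\langle\varphi,\psi\rangle\in\mathfrak{R}$. $\mathfrak{R}\vDash\varphi$ iff $\langle v,\mathfrak{R}\rangle\vDash\varphi$ for every valuation $v$. *)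

theory Defs
  imports Main
begin

text \<open>Formulas over propositional letters p_0, p_1, ... (indexed by nat), with the
connectives negation, disjunction, conjunction, implication, equivalence,
Epstein conjunction (Tri) and Epstein implication (Loop).\<close>

datatype form =
    Var nat
  | Neg form
  | Disj form form
  | Conj form form
  | Imp form form
  | Iff form form
  | Tri form form
  | Loop form form

primrec subst :: "(nat \<Rightarrow> form) \<Rightarrow> form \<Rightarrow> form" where
  "subst s (Var i) = s i"
| "subst s (Neg a) = Neg (subst s a)"
| "subst s (Disj a b) = Disj (subst s a) (subst s b)"
| "subst s (Conj a b) = Conj (subst s a) (subst s b)"
| "subst s (Imp a b) = Imp (subst s a) (subst s b)"
| "subst s (Iff a b) = Iff (subst s a) (subst s b)"
| "subst s (Tri a b) = Tri (subst s a) (subst s b)"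
| "subst s (Loop a b) = Loop (subst s a) (subst s b)"

text \<open>Truth in an Epstein model (v, R), R an arbitrary binary relation on formulas.\<close>

primrec sat :: "(nat \<Rightarrow> bool) \<Rightarrow> (form \<times> form) set \<Rightarrow> form \<Rightarrow> bool" where
  "sat v R (Var i) = v i"
| "sat v R (Neg a) = (\<not> sat v R a)"
| "sat v R (Disj a b) = (sat v R a \<or> sat v R b)"
| "sat v R (Conj a b) = (sat v R a \<and> sat v R b)"
| "sat v R (Imp a b) = (sat v R a \<longrightarrow> sat v R b)"
| "sat v R (Iff a b) = (sat v R a \<longleftrightarrow> sat v R b)"
| "sat v R (Tri a b) = (sat v R a \<and> sat v R b \<and> (a, b) \<in> R)"
| "sat v R (Loop a b) = ((sat v R a \<longrightarrow> sat v R b) \<and> (a, b) \<in> R)"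

definition valid_in :: "(form \<times> form) set \<Rightarrow> form \<Rightarrow> bool" where
  "valid_in R a \<longleftrightarrow> (\<forall>v. sat v R a)"

primrec ppow :: "nat \<Rightarrow> nat \<Rightarrow> nat \<Rightarrow> form" where
  "ppow p q 0 = Loop (Var q) (Var p)"
| "ppow p q (Suc n) = Imp (Var p) (ppow p q n)"

end

theory Submission
  imports Defs
begin

text \<open>Substitute p for every letter and evaluate under a valuation making p true.
The instance of q \<looparrowright> p^n becomes p \<looparrowright> (p \<rightarrow> \<dots> \<rightarrow> (p \<looparrowright> p)); since p is true,
its consequent forces the innermost p \<looparrowright> p, i.e. (p, p) \<in> R.\<close>

lemma valid_in_Loop_self_iff: "valid_in R (Loop a a) \<longleftrightarrow> (a, a) \<in> R"
  by (simp add: valid_in_def)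

lemma sat_subst_ppow_imp_Loop_mem:
  assumes "v p" and "sat v R (subst (\<lambda>_. Var p) (ppow p q n))"
  shows "(Var p, Var p) \<in> R"
  using assms by (induction n) auto

theorem mainTheorem7:
  fixes p q n :: nat and R :: "(form \<times> form) set"
  assumes "p \<noteq> q" and "n \<noteq> 0"
    and "\<forall>s. valid_in R (subst s (Loop (Var q) (ppow p q n)))"
  shows "valid_in R (Loop (Var p) (Var p))"
proof -
  have "sat (\<lambda>_. True) R (subst (\<lambda>_. Var p) (Loop (Var q) (ppow p q n)))"
    using assms(3) unfolding valid_in_def by blast
  then have "sat (\<lambda>_. True) R (subst (\<lambda>_. Var p) (ppow p q n))"
    by simp
  then have "(Var p, Var p) \<in> R"
    using sat_subst_ppow_imp_Loop_mem[of "\<lambda>_. True"] by simp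
  then show ?thesis
    by (simp add: valid_in_Loop_self_iff)
qed

end
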